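(* (i) For every finite universe $U$, nested initial configurations and tie-breaking order as in the context, and every request sequence $\sigma$ over $U$, the position sequence $h_1,h_2,\dots$ of $\sigma$ satisfies the repeat property. (ii) Conversely, for every finite sequence $h_1,\dots,h_T$ of positive integers satisfying the repeat property, there exist a finite universe, initial configurations and a tie-breaking order as in the context, and a request sequence whose position sequence is $h_1,\dots,h_T$.
   Context: Unweighted paging over a finite universe $U$ of $n$ pages, request sequence $\sigma=(\sigma_1,\sigma_2,\dots)$. Fix a total order on $U$ for tie-breaking and nested initial configurations $\emptyset=C^0_0\subset C^1_0\subset\dots\subset C^n_0=U$ with $|C^m_0|=m$. For $1\le m\le n$, $\mathrm{FiF}^m$ is Belady's Farthest-in-Future algorithm with cache size $m$ started at $C^m_0$: on a request to a page not in its cache, it loads it and evicts the cached page whose next request is latest (never-requested-again pages count as latest; ties broken by the fixed order), and otherwise does nothing. Let $C^m_t$ be its cache after serving $\sigma_1,\dots,\sigma_t$, $C^0_t=\emptyset$; these satisfy $C^{m-1}_t\subset C^m_t$. The Belady ranking at time $t$ places the unique page of $C^m_t\setminus C^{m-1}_t$ at position $m$. The position sequence of $\sigma$ is $h_t:=$ the position of $\sigma_t$ in the Belady ranking at time $t-1$. A sequence $h_1,h_2,\dots$ of positive integers has the repeat property if for all $t_1<t_2$ with $h_{t_1}=h_{t_2}$ we have $\{2,3,\dots,h_{t_1}-1\}\subseteq\{h_{t_1+1},\dots,h_{t_2-1}\}$. *)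

theory Defs
  imports Main "HOL-Library.Extended_Nat"
begin

text \<open>Requests are indexed from time 1; the request sequence sigma has horizon N :: enat
  (N = \<infinity> for an infinite sequence, N = T for a finite sequence sigma_1..sigma_T).
  Values sigma s for s = 0 or s > N are irrelevant.\<close>

definition request_seq :: "'a set \<Rightarrow> (nat \<Rightarrow> 'a) \<Rightarrow> enat \<Rightarrow> bool" where
  "request_seq U \<sigma> N \<longleftrightarrow> (\<forall>s. 1 \<le> s \<and> enat s \<le> N \<longrightarrow> \<sigma> s \<in> U)"

text \<open>Setup: finite universe U, a total order on U given by an injective rank function rk
  (smaller rank = earlier in the order), and nested initial configurations C0 0 .. C0 n.\<close>

definition paging_setup :: "'a set \<Rightarrow> ('a \<Rightarrow> nat) \<Rightarrow> (nat \<Rightarrow> 'a set) \<Rightarrow> bool" where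
  "paging_setup U rk C0 \<longleftrightarrow> finite U \<and> inj_on rk U \<and> C0 0 = {}
     \<and> (\<forall>m < card U. C0 m \<subset> C0 (Suc m))
     \<and> (\<forall>m \<le> card U. card (C0 m) = m) \<and> C0 (card U) = U"

definition next_req :: "(nat \<Rightarrow> 'a) \<Rightarrow> enat \<Rightarrow> nat \<Rightarrow> 'a \<Rightarrow> enat" where
  "next_req \<sigma> N t p =
     (if \<exists>s. t < s \<and> enat s \<le> N \<and> \<sigma> s = p
      then enat (LEAST s. t < s \<and> enat s \<le> N \<and> \<sigma> s = p) else \<infinity>)"

definition victim :: "(nat \<Rightarrow> 'a) \<Rightarrow> enat \<Rightarrow> ('a \<Rightarrow> nat) \<Rightarrow> nat \<Rightarrow> 'a set \<Rightarrow> 'a" where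
  "victim \<sigma> N rk t C =
     (THE q. q \<in> C \<and> (\<forall>q'\<in>C. next_req \<sigma> N t q' < next_req \<sigma> N t q
                          \<or> (next_req \<sigma> N t q' = next_req \<sigma> N t q \<and> rk q \<le> rk q')))"

fun fif :: "(nat \<Rightarrow> 'a) \<Rightarrow> enat \<Rightarrow> ('a \<Rightarrow> nat) \<Rightarrow> 'a set \<Rightarrow> nat \<Rightarrow> 'a set" where
  "fif \<sigma> N rk Cinit 0 = Cinit"
| "fif \<sigma> N rk Cinit (Suc t) =
     (let C = fif \<sigma> N rk Cinit t; p = \<sigma> (Suc t) in
      if p \<in> C then C else insert p (C - {victim \<sigma> N rk (Suc t) C}))"

definition cache :: "(nat \<Rightarrow> 'a) \<Rightarrow> enat \<Rightarrow> ('a \<Rightarrow> nat) \<Rightarrow> (nat \<Rightarrow> 'a set) \<Rightarrow> nat \<Rightarrow> nat \<Rightarrow> 'a set" where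
  "cache \<sigma> N rk C0 m t = (if m = 0 then {} else fif \<sigma> N rk (C0 m) t)"

definition belady_pos :: "'a set \<Rightarrow> (nat \<Rightarrow> 'a) \<Rightarrow> enat \<Rightarrow> ('a \<Rightarrow> nat) \<Rightarrow> (nat \<Rightarrow> 'a set) \<Rightarrow> nat \<Rightarrow> 'a \<Rightarrow> nat" where
  "belady_pos U \<sigma> N rk C0 t p =
     (THE m. 1 \<le> m \<and> m \<le> card U \<and> p \<in> cache \<sigma> N rk C0 m t \<and> p \<notin> cache \<sigma> N rk C0 (m - 1) t)"

definition position_seq :: "'a set \<Rightarrow> ('a \<Rightarrow> nat) \<Rightarrow> (nat \<Rightarrow> 'a set) \<Rightarrow> (nat \<Rightarrow> 'a) \<Rightarrow> enat \<Rightarrow> nat \<Rightarrow> nat" where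
  "position_seq U rk C0 \<sigma> N t = belady_pos U \<sigma> N rk C0 (t - 1) (\<sigma> t)"

definition repeat_property :: "(nat \<Rightarrow> nat) \<Rightarrow> enat \<Rightarrow> bool" where
  "repeat_property h N \<longleftrightarrow>
     (\<forall>t1 t2. 1 \<le> t1 \<and> t1 < t2 \<and> enat t2 \<le> N \<and> h t1 = h t2 \<longrightarrow>
        {2..<h t1} \<subseteq> {h s | s. t1 < s \<and> s < t2})"

end

theory Submission
  imports Defs "HOL-Combinatorics.Transposition"
begin

text \<open>A request at position \<open>j\<close> of the Belady ranking leaves the caches of \<open>FiF\<^sup>m\<close>, \<open>m \<ge> j\<close>,
  unchanged, while each \<open>FiF\<^sup>m\<close> with \<open>m < j\<close> loads the requested page and evicts its victim.
  Consequently, right after a request at position \<open>H\<close>, FiF prefers evicting the page at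
  position \<open>H\<close> to the page at any position \<open>2 \<le> k < H\<close>; requests at positions other than \<open>k\<close>
  and \<open>H\<close> preserve this preference. Right before the next request at position \<open>H\<close> the page
  there is the one requested soonest, so the preference must have been destroyed in between by a
  request at position \<open>k\<close>.

  Conversely, given \<open>h\<close>, let the ranking evolve by swapping positions \<open>1\<close> and \<open>h\<^sub>t\<close> and request
  the page at position \<open>h\<^sub>t\<close>. The page at a position \<open>i \<ge> 2\<close> is next requested when position \<open>i\<close>
  is, so by the repeat property the page at position \<open>1\<close> is the FiF victim of every cache it
  has to leave.\<close>

section \<open>Next requests and the eviction order of FiF\<close>

lemma next_req_enatD:
  assumes "next_req \<sigma> N t q = enat s"
  shows "t < s \<and> enat s \<le> N \<and> \<sigma> s = q"
proof -
  have ex: "\<exists>s. t < s \<and> enat s \<le> N \<and> \<sigma> s = q"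
    using assms by (auto simp: next_req_def split: if_splits)
  then have "s = (LEAST s. t < s \<and> enat s \<le> N \<and> \<sigma> s = q)"
    using assms by (simp add: next_req_def)
  then show ?thesis using LeastI_ex[OF ex] by simp
qed

lemma next_req_le:
  assumes "t < s" "enat s \<le> N" "\<sigma> s = q"
  shows "next_req \<sigma> N t q \<le> enat s"
proof -
  have "(LEAST s. t < s \<and> enat s \<le> N \<and> \<sigma> s = q) \<le> s"
    by (rule Least_le) (use assms in auto)
  then show ?thesis using assms by (auto simp: next_req_def)
qed

lemma next_req_ge:
  assumes "\<And>s. t < s \<Longrightarrow> s < s0 \<Longrightarrow> \<sigma> s \<noteq> q"
  shows "enat s0 \<le> next_req \<sigma> N t q"
proof (cases "next_req \<sigma> N t q")
  case (enat s)
  then have "\<not> s < s0" using next_req_enatD[OF enat] assms by blast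
  then show ?thesis using enat by simp
qed simp

lemma next_req_eq_infinity_iff:
  "next_req \<sigma> N t q = \<infinity> \<longleftrightarrow> (\<forall>s. t < s \<and> enat s \<le> N \<longrightarrow> \<sigma> s \<noteq> q)"
  unfolding next_req_def by auto

lemma next_req_Suc:
  assumes "\<sigma> (Suc t) \<noteq> q"
  shows "next_req \<sigma> N (Suc t) q = next_req \<sigma> N t q"
proof -
  have "(\<lambda>s. Suc t < s \<and> enat s \<le> N \<and> \<sigma> s = q) = (\<lambda>s. t < s \<and> enat s \<le> N \<and> \<sigma> s = q)"
    using assms by (auto simp: fun_eq_iff) (metis Suc_lessI)
  then show ?thesis unfolding next_req_def by (simp only:)
qed

lemma next_req_eqI:
  assumes "\<And>s. t < s \<Longrightarrow> enat s \<le> N \<Longrightarrow> (\<forall>s'. t < s' \<and> s' < s \<longrightarrow> \<tau> s' \<noteq> b)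
      \<Longrightarrow> \<sigma> s = a \<longleftrightarrow> \<tau> s = b"
  shows "next_req \<sigma> N t a = next_req \<tau> N t b"
proof (cases "next_req \<tau> N t b")
  case (enat s)
  then have s: "t < s" "enat s \<le> N" "\<tau> s = b" using next_req_enatD[OF enat] by simp_all
  have in_time: "enat s' \<le> N" if "s' < s" for s'
    using that s(2) order.trans[of "enat s'" "enat s" N] by simp
  have before: "\<forall>s'. t < s' \<and> s' < s \<longrightarrow> \<tau> s' \<noteq> b"
  proof (intro allI impI notI)
    fix s' assume s': "t < s' \<and> s' < s" "\<tau> s' = b"
    then have "next_req \<tau> N t b \<le> enat s'" using next_req_le[of t s' N \<tau> b] in_time by simp
    then show False using enat s' by simp
  qed
  have "\<sigma> s' \<noteq> a" if s': "t < s'" "s' < s" for s'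
  proof -
    have "\<forall>s''. t < s'' \<and> s'' < s' \<longrightarrow> \<tau> s'' \<noteq> b" using before s'(2) by simp
    then have "\<sigma> s' = a \<longleftrightarrow> \<tau> s' = b" using assms s'(1) in_time[OF s'(2)] by blast
    then show ?thesis using before s' by blast
  qed
  then have "enat s \<le> next_req \<sigma> N t a" by (rule next_req_ge)
  moreover have "\<sigma> s = a" using assms[OF s(1,2) before] s(3) by simp
  then have "next_req \<sigma> N t a \<le> enat s" using s(1,2) by (rule next_req_le[rotated 2])
  ultimately show ?thesis using enat by simp
next
  case infinity
  note b_never = this
  then have never: "\<forall>s. t < s \<and> enat s \<le> N \<longrightarrow> \<tau> s \<noteq> b"
    by (simp add: next_req_eq_infinity_iff)
  have "\<sigma> s \<noteq> a" if s: "t < s" "enat s \<le> N" for s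
  proof -
    have "\<forall>s'. t < s' \<and> s' < s \<longrightarrow> \<tau> s' \<noteq> b"
      using never s(2) order.trans[of _ "enat s" N] by (metis enat_ord_simps(2) less_imp_le)
    then have "\<sigma> s = a \<longleftrightarrow> \<tau> s = b" using assms s by blast
    then show ?thesis using never s by blast
  qed
  then have "next_req \<sigma> N t a = \<infinity>" unfolding next_req_eq_infinity_iff by blast
  then show ?thesis using b_never by simp
qed

lemma next_req_requested:
  assumes "enat (Suc t) \<le> N"
  shows "next_req \<sigma> N t (\<sigma> (Suc t)) = enat (Suc t)"
  by (rule antisym[OF next_req_le next_req_ge]) (use assms in auto)

text \<open>\<open>fif_le \<sigma> N rk t a b\<close>: when serving time \<open>t\<close>, FiF evicts \<open>b\<close> rather than \<open>a\<close> (or \<open>a = b\<close>);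
  the victim is the greatest element of the cache in this total preorder.\<close>

definition fif_le :: "(nat \<Rightarrow> 'a) \<Rightarrow> enat \<Rightarrow> ('a \<Rightarrow> nat) \<Rightarrow> nat \<Rightarrow> 'a \<Rightarrow> 'a \<Rightarrow> bool" where
  "fif_le \<sigma> N rk t a b \<longleftrightarrow> next_req \<sigma> N t a < next_req \<sigma> N t b
      \<or> (next_req \<sigma> N t a = next_req \<sigma> N t b \<and> rk b \<le> rk a)"

lemma fif_le_refl: "fif_le \<sigma> N rk t a a"
  by (simp add: fif_le_def)

lemma fif_le_trans: "fif_le \<sigma> N rk t a b \<Longrightarrow> fif_le \<sigma> N rk t b c \<Longrightarrow> fif_le \<sigma> N rk t a c"
  unfolding fif_le_def by (auto elim: order.strict_trans)

lemma fif_le_total: "fif_le \<sigma> N rk t a b \<or> fif_le \<sigma> N rk t b a"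
  unfolding fif_le_def by auto

lemma fif_le_Suc:
  "\<sigma> (Suc t) \<noteq> a \<Longrightarrow> \<sigma> (Suc t) \<noteq> b \<Longrightarrow> fif_le \<sigma> N rk t a b \<Longrightarrow> fif_le \<sigma> N rk (Suc t) a b"
  unfolding fif_le_def by (simp add: next_req_Suc)

lemma victim_eqI:
  assumes "inj_on rk C" "v \<in> C" "\<forall>q\<in>C. fif_le \<sigma> N rk t q v"
  shows "victim \<sigma> N rk t C = v"
  unfolding victim_def
proof (rule the_equality)
  fix w assume w: "w \<in> C \<and> (\<forall>q'\<in>C. next_req \<sigma> N t q' < next_req \<sigma> N t w \<or>
          next_req \<sigma> N t q' = next_req \<sigma> N t w \<and> rk w \<le> rk q')"
  then have "fif_le \<sigma> N rk t v w" "fif_le \<sigma> N rk t w v"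
    using assms(2,3) by (simp_all add: fif_le_def)
  then have "rk w = rk v" unfolding fif_le_def by auto
  then show "w = v" using inj_onD[OF assms(1)] assms(2) w by blast
qed (use assms(2,3) in \<open>simp add: fif_le_def\<close>)

lemma fif_le_greatest_exists:
  assumes "finite C" "C \<noteq> {}"
  shows "\<exists>v\<in>C. \<forall>q\<in>C. fif_le \<sigma> N rk t q v"
  using assms
proof (induction C rule: finite_ne_induct)
  case (insert x F)
  then obtain v where v: "v \<in> F" "\<forall>q\<in>F. fif_le \<sigma> N rk t q v" by blast
  show ?case
  proof (cases "fif_le \<sigma> N rk t v x")
    case True
    then have "\<forall>q\<in>F. fif_le \<sigma> N rk t q x" using v(2) fif_le_trans[OF _ True] by blast
    then show ?thesis by (intro bexI[of _ x]) (auto simp: fif_le_refl)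
  next
    case False
    then have "fif_le \<sigma> N rk t x v" using fif_le_total[of \<sigma> N rk t v x] by blast
    then show ?thesis using v by (intro bexI[of _ v]) auto
  qed
qed (simp add: fif_le_refl)

lemma victim_greatest:
  assumes "finite C" "C \<noteq> {}" "inj_on rk C"
  shows "victim \<sigma> N rk t C \<in> C" and "\<forall>q\<in>C. fif_le \<sigma> N rk t q (victim \<sigma> N rk t C)"
proof -
  obtain v where "v \<in> C" "\<forall>q\<in>C. fif_le \<sigma> N rk t q v"
    using fif_le_greatest_exists[OF assms(1,2)] by blast
  moreover from this have "victim \<sigma> N rk t C = v" by (rule victim_eqI[OF assms(3)])
  ultimately show "victim \<sigma> N rk t C \<in> C" "\<forall>q\<in>C. fif_le \<sigma> N rk t q (victim \<sigma> N rk t C)"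
    by simp_all
qed

lemma victim_subset:
  assumes "finite B" "inj_on rk B" "A \<subseteq> B" "victim \<sigma> N rk t B \<in> A"
  shows "victim \<sigma> N rk t A = victim \<sigma> N rk t B"
proof (rule victim_eqI)
  have "B \<noteq> {}" using assms(3,4) by blast
  then show "\<forall>q\<in>A. fif_le \<sigma> N rk t q (victim \<sigma> N rk t B)"
    using victim_greatest(2)[OF assms(1) _ assms(2)] assms(3) by blast
qed (use assms inj_on_subset in blast)+

definition fif_update :: "(nat \<Rightarrow> 'a) \<Rightarrow> enat \<Rightarrow> ('a \<Rightarrow> nat) \<Rightarrow> nat \<Rightarrow> 'a set \<Rightarrow> 'a set" where
  "fif_update \<sigma> N rk t X =
     (if \<sigma> t \<in> X then X else insert (\<sigma> t) (X - {victim \<sigma> N rk t X}))"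

lemma fif_Suc_eq_update: "fif \<sigma> N rk Cinit (Suc t) = fif_update \<sigma> N rk (Suc t) (fif \<sigma> N rk Cinit t)"
  by (simp add: fif_update_def Let_def)

lemma requested_in_fif_update: "\<sigma> t \<in> fif_update \<sigma> N rk t X"
  by (simp add: fif_update_def)

lemma fif_update_subset: "fif_update \<sigma> N rk t X \<subseteq> insert (\<sigma> t) X"
  by (auto simp: fif_update_def)

lemma card_fif_update:
  assumes "finite X" "X \<noteq> {}" "inj_on rk X"
  shows "card (fif_update \<sigma> N rk t X) = card X"
proof (cases "\<sigma> t \<in> X")
  case False
  have "victim \<sigma> N rk t X \<in> X" using victim_greatest(1)[OF assms] .
  then have "card (insert (\<sigma> t) (X - {victim \<sigma> N rk t X})) = Suc (card X - 1)"
    using False assms(1) by (simp add: card_Diff_singleton)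
  moreover have "0 < card X" using assms(1,2) by (simp add: card_gt_0_iff)
  ultimately show ?thesis using False by (simp add: fif_update_def)
qed (simp add: fif_update_def)

lemma fif_update_mono:
  assumes "A \<subseteq> B" "finite B" "inj_on rk B"
  shows "fif_update \<sigma> N rk t A \<subseteq> fif_update \<sigma> N rk t B"
proof (cases "\<sigma> t \<in> B")
  case False
  then have "\<sigma> t \<notin> A" using assms(1) by blast
  moreover have "A - {victim \<sigma> N rk t A} \<subseteq> B - {victim \<sigma> N rk t B}"
  proof (cases "victim \<sigma> N rk t B \<in> A")
    case True
    then show ?thesis using victim_subset[OF assms(2,3,1) True] assms(1) by auto
  qed (use assms(1) in blast)
  ultimately show ?thesis using False by (auto simp: fif_update_def)
qed (use assms(1) in \<open>auto simp: fif_update_def\<close>)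

lemma cache_level_0 [simp]: "cache \<sigma> N rk C0 0 t = {}"
  by (simp add: cache_def)

lemma cache_Suc:
  "0 < m \<Longrightarrow> cache \<sigma> N rk C0 m (Suc t) = fif_update \<sigma> N rk (Suc t) (cache \<sigma> N rk C0 m t)"
  unfolding cache_def by (simp del: fif.simps add: fif_Suc_eq_update)

lemma belady_pos_eqI:
  assumes "1 \<le> m" "m \<le> card U"
    and "\<And>m'. m' \<le> card U \<Longrightarrow> p \<in> cache \<sigma> N rk C0 m' t \<longleftrightarrow> m \<le> m'"
  shows "belady_pos U \<sigma> N rk C0 t p = m"
  unfolding belady_pos_def
proof (rule the_equality)
  fix m' assume m': "1 \<le> m' \<and> m' \<le> card U \<and> p \<in> cache \<sigma> N rk C0 m' t
      \<and> p \<notin> cache \<sigma> N rk C0 (m' - 1) t"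
  then have "m' - 1 \<le> card U" by linarith
  then have "m \<le> m'" "\<not> m \<le> m' - 1" using assms(3) m' by blast+
  then show "m' = m" by linarith
next
  have "m - 1 \<le> card U" using assms(2) by linarith
  then show "1 \<le> m \<and> m \<le> card U \<and> p \<in> cache \<sigma> N rk C0 m t \<and> p \<notin> cache \<sigma> N rk C0 (m - 1) t"
    using assms(1,2) assms(3)[of m] assms(3)[of "m - 1"] by simp
qed

section \<open>The Belady ranking along a request sequence\<close>

locale paging_run =
  fixes U :: "'a set" and rk :: "'a \<Rightarrow> nat" and C0 :: "nat \<Rightarrow> 'a set"
    and \<sigma> :: "nat \<Rightarrow> 'a" and N :: enat
  assumes paging: "paging_setup U rk C0" and requests: "request_seq U \<sigma> N"
begin

abbreviation "n \<equiv> card U"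
abbreviation "C m t \<equiv> cache \<sigma> N rk C0 m t"
abbreviation "fle t \<equiv> fif_le \<sigma> N rk t"
abbreviation "evict t X \<equiv> victim \<sigma> N rk t X"
abbreviation "h \<equiv> position_seq U rk C0 \<sigma> N"

lemma finite_U: "finite U" and inj_rk: "inj_on rk U" and C0_0: "C0 0 = {}"
  and C0_psubset: "\<And>m. m < n \<Longrightarrow> C0 m \<subset> C0 (Suc m)"
  and card_C0: "\<And>m. m \<le> n \<Longrightarrow> card (C0 m) = m" and C0_top: "C0 n = U"
  using paging unfolding paging_setup_def by auto

lemma request_in_U: "1 \<le> s \<Longrightarrow> enat s \<le> N \<Longrightarrow> \<sigma> s \<in> U"
  using requests unfolding request_seq_def by blast

lemma cache_time_0: "C m 0 = C0 m"
  by (simp add: cache_def C0_0)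

lemma requested_in_cache: "0 < m \<Longrightarrow> \<sigma> (Suc t) \<in> C m (Suc t)"
  by (simp add: cache_Suc requested_in_fif_update)

definition ladder :: "nat \<Rightarrow> bool" where
  "ladder t \<longleftrightarrow> (\<forall>m\<le>n. C m t \<subseteq> U \<and> card (C m t) = m) \<and> (\<forall>m<n. C m t \<subseteq> C (Suc m) t)"

lemma ladder_0: "ladder 0"
proof -
  have "C0 m \<subseteq> C0 (Suc m)" if "m < n" for m
    using C0_psubset[OF that] by blast
  then have "C0 m \<subseteq> C0 n" if "m \<le> n" for m
    by (rule lift_Suc_mono_le_ivl[of "{..<n}"]) (use that in auto)
  then show ?thesis using C0_psubset card_C0 C0_top unfolding ladder_def cache_time_0 by auto
qed

lemma ladder_Suc:
  assumes ladder: "ladder t" and in_time: "enat (Suc t) \<le> N"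
  shows "ladder (Suc t)"
proof -
  have fin: "finite (C m t)" and inj: "inj_on rk (C m t)" if "m \<le> n" for m
    using ladder that finite_U inj_rk unfolding ladder_def by (auto intro: finite_subset inj_on_subset)
  have level: "C m (Suc t) \<subseteq> U \<and> card (C m (Suc t)) = m" if m: "0 < m" "m \<le> n" for m
  proof -
    have "C m t \<noteq> {}" using ladder m unfolding ladder_def by auto
    then have "card (C m (Suc t)) = m"
      using card_fif_update[OF fin[OF m(2)] _ inj[OF m(2)]] ladder m unfolding ladder_def by (simp add: cache_Suc)
    moreover have "C m (Suc t) \<subseteq> insert (\<sigma> (Suc t)) (C m t)"
      using m(1) by (simp add: cache_Suc fif_update_subset)
    ultimately show ?thesis using ladder m request_in_U[OF _ in_time] unfolding ladder_def by auto
  qed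
  have nested: "C m (Suc t) \<subseteq> C (Suc m) (Suc t)" if m: "0 < m" "m < n" for m
    using fif_update_mono[OF _ fin[of "Suc m"] inj[of "Suc m"]] ladder m unfolding ladder_def
    by (simp add: cache_Suc)
  show ?thesis
    unfolding ladder_def using level nested by (metis cache_level_0 card.empty empty_subsetI gr0I)
qed

lemma ladder: "enat t \<le> N \<Longrightarrow> ladder t"
proof (induction t)
  case (Suc t)
  then show ?case using ladder_Suc order.trans[of "enat t" "enat (Suc t)" N] by simp
qed (rule ladder_0)

lemma ladder_before: "enat (Suc t) \<le> N \<Longrightarrow> ladder t"
  using ladder order.trans[of "enat t" "enat (Suc t)" N] by simp

definition at_pos :: "nat \<Rightarrow> 'a \<Rightarrow> nat \<Rightarrow> bool" where
  "at_pos t q m \<longleftrightarrow> 1 \<le> m \<and> m \<le> n \<and> q \<in> C m t \<and> q \<notin> C (m - 1) t"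

context
  fixes t assumes ladder: "ladder t"
begin

lemma cache_mono: "m \<le> m' \<Longrightarrow> m' \<le> n \<Longrightarrow> C m t \<subseteq> C m' t"
  by (rule lift_Suc_mono_le_ivl[of "{..<n}"]) (use ladder in \<open>auto simp: ladder_def\<close>)

lemma cache_subset_U: "m \<le> n \<Longrightarrow> C m t \<subseteq> U"
  and card_cache: "m \<le> n \<Longrightarrow> card (C m t) = m"
  using ladder unfolding ladder_def by auto

lemma finite_cache: "m \<le> n \<Longrightarrow> finite (C m t)"
  using finite_subset[OF cache_subset_U finite_U] .

lemma inj_on_cache: "m \<le> n \<Longrightarrow> inj_on rk (C m t)"
  using inj_on_subset[OF inj_rk cache_subset_U] .

lemma cache_top: "C n t = U"
  using cache_subset_U card_cache finite_U by (simp add: card_subset_eq)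

lemma evict_greatest:
  assumes "1 \<le> m" "m \<le> n"
  shows "evict s (C m t) \<in> C m t" and "\<forall>q\<in>C m t. fle s q (evict s (C m t))"
proof -
  have "C m t \<noteq> {}" using card_cache[OF assms(2)] assms(1) by auto
  then show "evict s (C m t) \<in> C m t" "\<forall>q\<in>C m t. fle s q (evict s (C m t))"
    using victim_greatest[OF finite_cache[OF assms(2)] _ inj_on_cache[OF assms(2)]] by simp_all
qed

lemma evict_of_lower_cache:
  assumes "1 \<le> m" "m \<le> m'" "m' \<le> n" "evict s (C m' t) \<in> C m t"
  shows "evict s (C m' t) = evict s (C m t)"
proof -
  have "C m t \<subseteq> C m' t" using cache_mono assms(2,3) .
  then show ?thesis
    using victim_subset[OF finite_cache[OF assms(3)] inj_on_cache[OF assms(3)] _ assms(4)] by simp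
qed

lemma mem_cache_iff_at_pos:
  assumes "at_pos t q m" "m' \<le> n"
  shows "q \<in> C m' t \<longleftrightarrow> m \<le> m'"
proof
  assume q: "q \<in> C m' t"
  show "m \<le> m'"
  proof (rule ccontr)
    assume "\<not> m \<le> m'"
    moreover have "m \<le> n" using assms(1) unfolding at_pos_def by simp
    ultimately have "m' \<le> m - 1" "m - 1 \<le> n" by linarith+
    then have "C m' t \<subseteq> C (m - 1) t" by (rule cache_mono)
    then show False using q assms(1) unfolding at_pos_def by blast
  qed
next
  assume "m \<le> m'"
  then show "q \<in> C m' t" using cache_mono[OF _ assms(2)] assms(1) unfolding at_pos_def by blast
qed

lemma at_pos_unique:
  assumes "at_pos t q m" "at_pos t q m'"
  shows "m = m'"
proof -
  have "m \<le> m'" using mem_cache_iff_at_pos[OF assms(1), of m'] assms(2) by (simp add: at_pos_def)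
  moreover have "m' \<le> m" using mem_cache_iff_at_pos[OF assms(2), of m] assms(1) by (simp add: at_pos_def)
  ultimately show ?thesis by simp
qed

lemma card_position:
  assumes "1 \<le> m" "m \<le> n"
  shows "card (C m t - C (m - 1) t) = 1"
proof -
  have "m - 1 \<le> n" using assms(2) by linarith
  have "C (m - 1) t \<subseteq> C m t" using cache_mono assms(2) by simp
  then have "card (C m t - C (m - 1) t) = card (C m t) - card (C (m - 1) t)"
    using card_Diff_subset finite_cache[OF \<open>m - 1 \<le> n\<close>] by blast
  then show ?thesis using card_cache[OF assms(2)] card_cache[OF \<open>m - 1 \<le> n\<close>] assms(1) by simp
qed

lemma at_pos_page_unique:
  assumes "at_pos t x m" "at_pos t y m"
  shows "x = y"
proof -
  obtain z where z: "C m t - C (m - 1) t = {z}"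
    using card_position assms(1) unfolding at_pos_def by (meson card_1_singletonE)
  have "x \<in> C m t - C (m - 1) t" "y \<in> C m t - C (m - 1) t"
    using assms unfolding at_pos_def by simp_all
  then show ?thesis unfolding z by simp
qed

lemma at_pos_page_exists:
  assumes "1 \<le> m" "m \<le> n"
  shows "\<exists>x. at_pos t x m"
proof -
  obtain z where "C m t - C (m - 1) t = {z}"
    using card_position[OF assms] by (rule card_1_singletonE)
  then show ?thesis using assms unfolding at_pos_def by blast
qed

lemma at_pos_exists:
  assumes "q \<in> U"
  shows "\<exists>m. at_pos t q m"
proof -
  have top: "q \<in> C n t" using assms cache_top by simp
  define m where "m = (LEAST m. q \<in> C m t)"
  have q: "q \<in> C m t" and "m \<le> n"
    using LeastI[of "\<lambda>m. q \<in> C m t", OF top] Least_le[of "\<lambda>m. q \<in> C m t", OF top]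
    unfolding m_def by simp_all
  moreover have "m \<noteq> 0" using q by (intro notI) simp
  moreover have "q \<notin> C (m - 1) t"
  proof
    assume "q \<in> C (m - 1) t"
    then have "m \<le> m - 1" unfolding m_def by (rule Least_le)
    then show False using \<open>m \<noteq> 0\<close> by simp
  qed
  ultimately show ?thesis unfolding at_pos_def by (intro exI[of _ m]) simp
qed

lemma belady_pos_at_pos:
  assumes "at_pos t q m"
  shows "belady_pos U \<sigma> N rk C0 t q = m"
proof (rule belady_pos_eqI)
  show "1 \<le> m" "m \<le> n" using assms unfolding at_pos_def by simp_all
qed (rule mem_cache_iff_at_pos[OF assms])

end

lemma at_pos_position_seq:
  assumes "1 \<le> s" "enat s \<le> N"
  shows "at_pos (s - 1) (\<sigma> s) (position_seq U rk C0 \<sigma> N s)"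
proof -
  have "ladder (s - 1)" using ladder_before assms by simp
  moreover obtain m where "at_pos (s - 1) (\<sigma> s) m"
    using at_pos_exists[OF \<open>ladder (s - 1)\<close> request_in_U[OF assms]] by blast
  ultimately show ?thesis using belady_pos_at_pos unfolding position_seq_def by simp
qed

context
  fixes t j
  assumes ladder: "ladder t" and request_pos: "at_pos t (\<sigma> (Suc t)) j"
begin

lemma request_pos_le: "j \<le> n"
  using request_pos unfolding at_pos_def by simp

lemma cache_Suc_above:
  assumes "j \<le> m" "m \<le> n"
  shows "C m (Suc t) = C m t"
proof -
  have "\<sigma> (Suc t) \<in> C m t" using mem_cache_iff_at_pos[OF ladder request_pos assms(2)] assms(1) by simp
  moreover have "0 < m" using request_pos assms(1) unfolding at_pos_def by simp
  ultimately show ?thesis by (simp add: cache_Suc fif_update_def)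
qed

lemma cache_Suc_below:
  assumes "1 \<le> m" "m < j"
  shows "\<sigma> (Suc t) \<notin> C m t"
    and "C m (Suc t) = insert (\<sigma> (Suc t)) (C m t - {evict (Suc t) (C m t)})"
proof -
  show "\<sigma> (Suc t) \<notin> C m t"
    using mem_cache_iff_at_pos[OF ladder request_pos, of m] request_pos_le assms by simp
  then show "C m (Suc t) = insert (\<sigma> (Suc t)) (C m t - {evict (Suc t) (C m t)})"
    using assms(1) by (simp add: cache_Suc fif_update_def)
qed

lemma at_pos_Suc_above:
  assumes x: "at_pos t x m" and m: "j < m"
  shows "at_pos (Suc t) x m"
proof -
  have "m \<le> n" using x unfolding at_pos_def by simp
  then have "C m (Suc t) = C m t" "C (m - 1) (Suc t) = C (m - 1) t"
    using cache_Suc_above m by simp_all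
  then show ?thesis using x unfolding at_pos_def by simp
qed

text \<open>Below the requested position each level evicts its FiF victim, so the page that ends up
  at position \<open>m\<close> is either the old one or the page evicted from level \<open>m - 1\<close>; in the
  latter case the old page was the victim of level \<open>m\<close>.\<close>

lemma at_pos_Suc_below:
  assumes m: "2 \<le> m" "m < j" and x: "at_pos t x m" and x': "at_pos (Suc t) x' m"
  shows "x' \<in> C m t" and "x' = x \<or> x' = evict (Suc t) (C (m - 1) t)" and "fle (Suc t) x' x"
proof -
  let ?p = "\<sigma> (Suc t)" and ?v = "evict (Suc t) (C m t)" and ?u = "evict (Suc t) (C (m - 1) t)"
  have "1 \<le> m" "1 \<le> m - 1" "m - 1 < j" using m by linarith+
  have up: "C m (Suc t) = insert ?p (C m t - {?v})"
    using cache_Suc_below(2)[OF \<open>1 \<le> m\<close> m(2)] .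
  have up0: "C (m - 1) (Suc t) = insert ?p (C (m - 1) t - {?u})"
    using cache_Suc_below(2)[OF \<open>1 \<le> m - 1\<close> \<open>m - 1 < j\<close>] .
  have "x' \<noteq> ?p" using x' up0 unfolding at_pos_def by auto
  then have x'_in: "x' \<in> C m t" and "x' \<noteq> ?v" using x' up unfolding at_pos_def by auto
  then show "x' \<in> C m t" by simp
  have v_greatest: "\<forall>q\<in>C m t. fle (Suc t) q ?v"
    using evict_greatest(2)[OF ladder, of m] m request_pos_le by simp
  have "x' = x \<or> x' = ?u \<and> ?v = x"
  proof (cases "x' \<in> C (m - 1) t")
    case False
    then have "at_pos t x' m" using x'_in x unfolding at_pos_def by simp
    then show ?thesis using at_pos_page_unique[OF ladder _ x] by simp
  next
    case True
    then have "x' = ?u" using x' up0 unfolding at_pos_def by auto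
    have "?v \<notin> C (m - 1) t"
    proof
      assume "?v \<in> C (m - 1) t"
      then have "?v = ?u" using evict_of_lower_cache[OF ladder, of "m - 1" m] m request_pos_le by simp
      then show False using \<open>x' = ?u\<close> \<open>x' \<noteq> ?v\<close> by simp
    qed
    then have "at_pos t ?v m"
      using evict_greatest(1)[OF ladder, of m] x m request_pos_le unfolding at_pos_def by simp
    then show ?thesis using at_pos_page_unique[OF ladder _ x] \<open>x' = ?u\<close> by simp
  qed
  then show "x' = x \<or> x' = ?u" and "fle (Suc t) x' x"
    using v_greatest x'_in fif_le_refl by auto
qed

lemma fif_le_Suc_below:
  assumes k: "2 \<le> k" "k < H" "H < j"
    and x: "at_pos t x k" "at_pos (Suc t) x' k" and y: "at_pos t y H" "at_pos (Suc t) y' H"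
    and xy: "fle (Suc t) x y"
  shows "fle (Suc t) x' y'"
proof -
  have x'x: "fle (Suc t) x' x" and "x' \<in> C k t" using at_pos_Suc_below[OF k(1) _ x] k by simp_all
  show ?thesis
  proof (cases "y' = y")
    case True
    then show ?thesis using fif_le_trans[OF x'x xy] by simp
  next
    case False
    then have "y' = evict (Suc t) (C (H - 1) t)" using at_pos_Suc_below(2)[OF _ k(3) y] k by simp
    moreover have "k \<le> H - 1" "H - 1 \<le> n" using k request_pos_le by linarith+
    then have "x' \<in> C (H - 1) t" using \<open>x' \<in> C k t\<close> cache_mono[OF ladder] by blast
    ultimately show ?thesis using evict_greatest(2)[OF ladder, of "H - 1"] k request_pos_le by simp
  qed
qed

end

definition pos_fif_le :: "nat \<Rightarrow> nat \<Rightarrow> nat \<Rightarrow> bool" where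
  "pos_fif_le t k H \<longleftrightarrow> (\<exists>x y. at_pos t x k \<and> at_pos t y H \<and> fle t x y)"

lemma pos_fif_le_after_request:
  assumes in_time: "enat (Suc t) \<le> N" and req: "at_pos t (\<sigma> (Suc t)) H" and k: "2 \<le> k" "k < H"
  shows "pos_fif_le (Suc t) k H"
proof -
  let ?p = "\<sigma> (Suc t)" and ?y = "evict (Suc t) (C (H - 1) t)"
  have ladder: "ladder t" and ladder': "ladder (Suc t)" using ladder_before ladder in_time by auto
  have Hn: "H \<le> n" using req unfolding at_pos_def by simp
  have up: "C (H - 1) (Suc t) = insert ?p (C (H - 1) t - {?y})" and "?p \<notin> C (H - 1) t"
    using cache_Suc_below[OF ladder req, of "H - 1"] k by simp_all
  have y: "?y \<in> C (H - 1) t" "\<forall>q\<in>C (H - 1) t. fle (Suc t) q ?y"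
    using evict_greatest[OF ladder, of "H - 1"] k Hn by simp_all
  have "C H (Suc t) = C H t" using cache_Suc_above[OF ladder req] Hn by simp
  moreover have "C (H - 1) t \<subseteq> C H t" using cache_mono[OF ladder] Hn by simp
  ultimately have y_pos: "at_pos (Suc t) ?y H"
    using y(1) up \<open>?p \<notin> C (H - 1) t\<close> Hn k unfolding at_pos_def by auto
  obtain x where x: "at_pos (Suc t) x k" using at_pos_page_exists[OF ladder', of k] k Hn by auto
  have "?p \<in> C (k - 1) (Suc t)" using requested_in_cache k by simp
  then have "x \<noteq> ?p" using x unfolding at_pos_def by auto
  moreover have "C k (Suc t) \<subseteq> C (H - 1) (Suc t)" using cache_mono[OF ladder'] k Hn by simp
  ultimately have "x \<in> C (H - 1) t" using x up unfolding at_pos_def by auto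
  then show ?thesis unfolding pos_fif_le_def using x y_pos y(2) by blast
qed

lemma pos_fif_le_Suc:
  assumes dom: "pos_fif_le t k H" and k: "2 \<le> k" "k < H"
    and in_time: "enat (Suc t) \<le> N" and req: "at_pos t (\<sigma> (Suc t)) j" and j: "j \<noteq> k" "j \<noteq> H"
  shows "pos_fif_le (Suc t) k H"
proof -
  obtain x y where x: "at_pos t x k" and y: "at_pos t y H" and xy: "fle t x y"
    using dom unfolding pos_fif_le_def by blast
  have ladder: "ladder t" and ladder': "ladder (Suc t)" using ladder_before ladder in_time by auto
  have Hn: "H \<le> n" using y unfolding at_pos_def by simp
  have "\<sigma> (Suc t) \<noteq> x" "\<sigma> (Suc t) \<noteq> y"
    using at_pos_unique[OF ladder req, of k] at_pos_unique[OF ladder req, of H] x y j by auto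
  then have xy': "fle (Suc t) x y" using fif_le_Suc[OF _ _ xy] by simp
  consider "j < k" | "k < j" "j < H" | "H < j" using j k by linarith
  then show ?thesis
  proof cases
    case 1
    then have "at_pos (Suc t) x k" "at_pos (Suc t) y H"
      using at_pos_Suc_above[OF ladder req] x y k by simp_all
    then show ?thesis using xy' unfolding pos_fif_le_def by blast
  next
    case 2
    obtain x' where x': "at_pos (Suc t) x' k" using at_pos_page_exists[OF ladder', of k] k Hn by auto
    have "fle (Suc t) x' x" using at_pos_Suc_below(3)[OF ladder req k(1) 2(1) x x'] .
    then have "fle (Suc t) x' y" using fif_le_trans[OF _ xy'] by simp
    moreover have "at_pos (Suc t) y H" using at_pos_Suc_above[OF ladder req y] 2 by simp
    ultimately show ?thesis unfolding pos_fif_le_def using x' by blast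
  next
    case 3
    obtain x' where x': "at_pos (Suc t) x' k" using at_pos_page_exists[OF ladder', of k] k Hn by auto
    obtain y' where y': "at_pos (Suc t) y' H" using at_pos_page_exists[OF ladder', of H] k Hn by auto
    have "fle (Suc t) x' y'" using fif_le_Suc_below[OF ladder req k 3 x x' y y' xy'] .
    then show ?thesis unfolding pos_fif_le_def using x' y' by blast
  qed
qed

lemma not_pos_fif_le_before_request:
  assumes in_time: "enat (Suc t) \<le> N" and req: "at_pos t (\<sigma> (Suc t)) H" and "k \<noteq> H"
  shows "\<not> pos_fif_le t k H"
proof
  assume "pos_fif_le t k H"
  then obtain x y where x: "at_pos t x k" and y: "at_pos t y H" and xy: "fle t x y"
    unfolding pos_fif_le_def by blast
  have ladder: "ladder t" using ladder_before in_time .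
  have "y = \<sigma> (Suc t)" using at_pos_page_unique[OF ladder y req] .
  then have ny: "next_req \<sigma> N t y = enat (Suc t)" using next_req_requested[OF in_time] by simp
  have "x \<noteq> \<sigma> (Suc t)" using at_pos_unique[OF ladder x] req \<open>k \<noteq> H\<close> by blast
  then have "next_req \<sigma> N t x \<noteq> enat (Suc t)" using next_req_enatD by metis
  moreover have "enat (Suc t) \<le> next_req \<sigma> N t x" by (rule next_req_ge) simp
  ultimately show False using xy ny unfolding fif_le_def by auto
qed

lemma pos_fif_le_persists:
  assumes "pos_fif_le t0 k H" "2 \<le> k" "k < H"
  shows "t0 \<le> t \<Longrightarrow> enat t \<le> N \<Longrightarrow> \<forall>s. t0 < s \<and> s \<le> t \<longrightarrow> h s \<noteq> k \<and> h s \<noteq> H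
    \<Longrightarrow> pos_fif_le t k H"
proof (induction t)
  case (Suc t)
  show ?case
  proof (cases "t0 = Suc t")
    case False
    then have "t0 \<le> t" using Suc.prems(1) by simp
    moreover have "enat t \<le> N" using Suc.prems(2) order.trans[of "enat t" "enat (Suc t)" N] by simp
    moreover have "\<forall>s. t0 < s \<and> s \<le> t \<longrightarrow> h s \<noteq> k \<and> h s \<noteq> H" using Suc.prems(3) by simp
    ultimately have "pos_fif_le t k H" by (rule Suc.IH)
    moreover have "at_pos t (\<sigma> (Suc t)) (h (Suc t))"
      using at_pos_position_seq[of "Suc t"] Suc.prems(2) by simp
    moreover have "h (Suc t) \<noteq> k" "h (Suc t) \<noteq> H" using Suc.prems(3) \<open>t0 \<le> t\<close> by simp_all
    ultimately show ?thesis using pos_fif_le_Suc assms(2,3) Suc.prems(2) by blast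
  qed (use assms(1) in simp)
qed (use assms(1) in simp)

lemma requested_between_repeats:
  assumes t: "1 \<le> t1" "t1 < t2" "enat t2 \<le> N" "h t2 = h t1"
    and first: "\<forall>s. t1 < s \<and> s < t2 \<longrightarrow> h s \<noteq> h t1" and k: "2 \<le> k" "k < h t1"
  shows "\<exists>s. t1 < s \<and> s < t2 \<and> h s = k"
proof (rule ccontr)
  assume k_absent: "\<not> (\<exists>s. t1 < s \<and> s < t2 \<and> h s = k)"
  obtain t0 where t0: "t1 = Suc t0" using t(1) by (cases t1) auto
  obtain t3 where t3: "t2 = Suc t3" using t(2) by (cases t2) auto
  have "enat t1 \<le> N" using t order.trans[of "enat t1" "enat t2" N] by simp
  then have "pos_fif_le t1 k (h t1)"
    using pos_fif_le_after_request[of t0] at_pos_position_seq[of t1] t0 k by simp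
  moreover have "\<forall>s. t1 < s \<and> s \<le> t3 \<longrightarrow> h s \<noteq> k \<and> h s \<noteq> h t1"
  proof (intro allI impI)
    fix s assume s: "t1 < s \<and> s \<le> t3"
    then have "s < t2" using t3 by simp
    then show "h s \<noteq> k \<and> h s \<noteq> h t1" using k_absent first s by blast
  qed
  ultimately have "pos_fif_le t3 k (h t1)"
    using pos_fif_le_persists k t(2,3) t3 order.trans[of "enat t3" "enat t2" N] by simp
  moreover have "at_pos t3 (\<sigma> (Suc t3)) (h t1)" using at_pos_position_seq[OF _ t(3)] t(4) t3 by simp
  ultimately show False using not_pos_fif_le_before_request t(3) t3 k by simp
qed

theorem repeat_property_position_seq: "repeat_property h N"
  unfolding repeat_property_def
proof (intro allI impI subsetI)
  fix t1 t2 k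
  assume t: "1 \<le> t1 \<and> t1 < t2 \<and> enat t2 \<le> N \<and> h t1 = h t2" and k: "k \<in> {2..<h t1}"
  define P where "P s \<longleftrightarrow> t1 < s \<and> h s = h t1" for s
  have "P t2" using t unfolding P_def by simp
  then have first: "t1 < Least P" "h (Least P) = h t1" and "Least P \<le> t2"
    using LeastI[of P t2] Least_le[of P t2] unfolding P_def by simp_all
  have "\<forall>s. t1 < s \<and> s < Least P \<longrightarrow> h s \<noteq> h t1"
  proof (intro allI impI)
    fix s assume "t1 < s \<and> s < Least P"
    then show "h s \<noteq> h t1" using not_less_Least[of s P] unfolding P_def by simp
  qed
  moreover have "enat (Least P) \<le> N"
    using t \<open>Least P \<le> t2\<close> order.trans[of "enat (Least P)" "enat t2" N] by simp
  ultimately obtain s where "t1 < s" "s < Least P" "h s = k"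
    using requested_between_repeats[of t1 "Least P" k] t first k by auto
  then show "k \<in> {h s |s. t1 < s \<and> s < t2}" using \<open>Least P \<le> t2\<close> by auto
qed

end

section \<open>Realising a sequence with the repeat property\<close>

text \<open>The Belady ranking of the construction, as a map from positions to pages.\<close>

fun ranking :: "(nat \<Rightarrow> nat) \<Rightarrow> nat \<Rightarrow> nat \<Rightarrow> nat" where
  "ranking h 0 = (\<lambda>i. i - 1)"
| "ranking h (Suc t) = ranking h t \<circ> transpose 1 (h (Suc t))"

definition ranking_requests :: "(nat \<Rightarrow> nat) \<Rightarrow> nat \<Rightarrow> nat" where
  "ranking_requests h t = ranking h (t - 1) (h t)"

lemma ranking_stable:
  assumes "2 \<le> i" "t0 \<le> t" "\<forall>s. t0 < s \<and> s \<le> t \<longrightarrow> h s \<noteq> i"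
  shows "ranking h t i = ranking h t0 i"
  using assms(2,3)
proof (induction t)
  case (Suc t)
  show ?case
  proof (cases "t0 = Suc t")
    case False
    then have "ranking h t i = ranking h t0 i" using Suc by simp
    moreover have "h (Suc t) \<noteq> i" using Suc.prems False by simp
    ultimately show ?thesis using assms(1) by simp
  qed simp
qed simp

lemma repeat_property_next_req:
  assumes "repeat_property h (enat T)" "1 \<le> t" "2 \<le> i" "i < h t"
    and "next_req h (enat T) t (h t) = enat s"
  shows "next_req h (enat T) t i < enat s"
proof -
  have "t < s" "s \<le> T" "h s = h t" using next_req_enatD[OF assms(5)] by simp_all
  then have "1 \<le> t \<and> t < s \<and> enat s \<le> enat T \<and> h t = h s" using assms(2) by simp
  then have "{2..<h t} \<subseteq> {h s' |s'. t < s' \<and> s' < s}"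
    using assms(1) unfolding repeat_property_def by blast
  then obtain s' where "t < s'" "s' < s" "h s' = i" using assms(3,4) by auto
  then have "next_req h (enat T) t i \<le> enat s'" using \<open>s \<le> T\<close> by (intro next_req_le) simp_all
  then show ?thesis using \<open>s' < s\<close> by (simp add: le_less_trans)
qed

locale repeat_seq =
  fixes T :: nat and h :: "nat \<Rightarrow> nat"
  assumes positive: "\<forall>t. 1 \<le> t \<and> t \<le> T \<longrightarrow> 1 \<le> h t" and repeat: "repeat_property h (enat T)"
begin

definition n :: nat where "n = Max (insert 0 (h ` {1..T}))"

abbreviation "\<pi> \<equiv> ranking h"
abbreviation "\<sigma> \<equiv> ranking_requests h"

text \<open>Pages that are never requested again keep their positions, so breaking ties by the final
  position (pages further back are evicted first) makes FiF evict the page at position 1.\<close>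

definition rk :: "nat \<Rightarrow> nat" where "rk q = n - the_inv_into {1..n} (\<pi> T) q"

lemma request_pos_bounds: "1 \<le> t \<Longrightarrow> t \<le> T \<Longrightarrow> 1 \<le> h t \<and> h t \<le> n"
  using positive unfolding n_def by (auto intro: Max_ge)

lemma bij_ranking: "t \<le> T \<Longrightarrow> bij_betw (\<pi> t) {1..n} {0..<n}"
proof (induction t)
  case 0
  show ?case by (rule bij_betw_byWitness[where f' = Suc]) auto
next
  case (Suc t)
  have "h (Suc t) \<in> {1..n}" using request_pos_bounds[of "Suc t"] Suc.prems by simp
  then have "bij_betw (transpose 1 (h (Suc t))) {1..n} {1..n}" by simp
  moreover have "bij_betw (\<pi> t) {1..n} {0..<n}" using Suc by simp
  ultimately have "bij_betw (\<pi> t \<circ> transpose 1 (h (Suc t))) {1..n} {0..<n}"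
    by (rule bij_betw_trans)
  then show ?case by (simp only: ranking.simps)
qed

lemma ranking_mem_image_iff:
  assumes "t \<le> T" "i \<in> {1..n}" "m \<le> n"
  shows "\<pi> t i \<in> \<pi> t ` {1..m} \<longleftrightarrow> i \<le> m"
proof -
  have "inj_on (\<pi> t) {1..n}" using bij_ranking[OF assms(1)] by (rule bij_betw_imp_inj_on)
  then have "\<pi> t i \<in> \<pi> t ` {1..m} \<longleftrightarrow> i \<in> {1..m}"
    using assms(2,3) by (intro inj_on_image_mem_iff) auto
  then show ?thesis using assms(2) by simp
qed

lemma request_eq_ranking_iff:
  assumes i: "2 \<le> i" "i \<le> n" and s: "t0 < s" "s \<le> T"
    and before: "\<forall>s'. t0 < s' \<and> s' < s \<longrightarrow> h s' \<noteq> i"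
  shows "\<sigma> s = \<pi> t0 i \<longleftrightarrow> h s = i"
proof -
  have "t0 \<le> s - 1" "\<forall>s'. t0 < s' \<and> s' \<le> s - 1 \<longrightarrow> h s' \<noteq> i" using s before by auto
  then have "\<pi> (s - 1) i = \<pi> t0 i" by (rule ranking_stable[OF i(1)])
  moreover have "h s \<in> {1..n}" "i \<in> {1..n}" using request_pos_bounds[of s] i s by simp_all
  moreover have "inj_on (\<pi> (s - 1)) {1..n}" using bij_ranking[of "s - 1"] s by (simp add: bij_betw_def)
  ultimately show ?thesis unfolding ranking_requests_def by (metis inj_on_eq_iff)
qed

lemma next_req_ranking:
  assumes "2 \<le> i" "i \<le> n"
  shows "next_req \<sigma> (enat T) t0 (\<pi> t0 i) = next_req h (enat T) t0 i"
  by (rule next_req_eqI) (use request_eq_ranking_iff assms in simp)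

lemma rk_final_ranking: "i \<in> {1..n} \<Longrightarrow> rk (\<pi> T i) = n - i"
  using bij_ranking[of T] unfolding rk_def by (simp add: bij_betw_def the_inv_into_f_f)

lemma inj_on_rk: "inj_on rk {0..<n}"
proof (rule inj_onI)
  fix p q assume "p \<in> {0..<n}" "q \<in> {0..<n}" "rk p = rk q"
  moreover obtain i j where "i \<in> {1..n}" "p = \<pi> T i" "j \<in> {1..n}" "q = \<pi> T j"
    using bij_ranking[of T] calculation(1,2) unfolding bij_betw_def by blast
  ultimately have "n - i = n - j" using rk_final_ranking by simp
  then have "i = j" using \<open>i \<in> {1..n}\<close> \<open>j \<in> {1..n}\<close> by auto
  then show "p = q" using \<open>p = \<pi> T i\<close> \<open>q = \<pi> T j\<close> by simp
qed

lemma fif_le_front: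
  assumes t: "Suc t \<le> T" and i: "2 \<le> i" "i < h (Suc t)"
  shows "fif_le \<sigma> (enat T) rk (Suc t) (\<pi> t i) (\<pi> t 1)"
proof -
  define j where "j = h (Suc t)"
  have j: "j \<le> n" "i < j" using request_pos_bounds[of "Suc t"] t i unfolding j_def by simp_all
  have front: "\<pi> (Suc t) j = \<pi> t 1" and other: "\<pi> (Suc t) i = \<pi> t i"
    using i unfolding j_def by simp_all
  have "2 \<le> j" using i j by linarith
  then have next_front: "next_req \<sigma> (enat T) (Suc t) (\<pi> t 1) = next_req h (enat T) (Suc t) j"
    using next_req_ranking[of j "Suc t", unfolded front] j by simp
  have next_i: "next_req \<sigma> (enat T) (Suc t) (\<pi> t i) = next_req h (enat T) (Suc t) i"
    using next_req_ranking[of i "Suc t", unfolded other] i j by simp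
  show ?thesis
  proof (cases "next_req h (enat T) (Suc t) j")
    case (enat s)
    then have "next_req h (enat T) (Suc t) i < next_req h (enat T) (Suc t) j"
      using repeat_property_next_req[OF repeat _ i, of s] unfolding j_def by simp
    then show ?thesis unfolding fif_le_def next_front next_i by simp
  next
    case infinity
    note j_never = this
    show ?thesis
    proof (cases "next_req h (enat T) (Suc t) i = \<infinity>")
      case True
      have "\<forall>s. Suc t < s \<and> s \<le> T \<longrightarrow> h s \<noteq> j" "\<forall>s. Suc t < s \<and> s \<le> T \<longrightarrow> h s \<noteq> i"
        using j_never True unfolding next_req_eq_infinity_iff by simp_all
      then have "\<pi> T j = \<pi> t 1" "\<pi> T i = \<pi> t i"
        using ranking_stable[OF \<open>2 \<le> j\<close> t] ranking_stable[OF i(1) t] front other by simp_all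
      then have "rk (\<pi> t 1) \<le> rk (\<pi> t i)"
        using rk_final_ranking[of j] rk_final_ranking[of i] i j by simp
      then show ?thesis using True j_never unfolding fif_le_def next_front next_i by simp
    next
      case False
      then show ?thesis unfolding fif_le_def next_front next_i using j_never by simp
    qed
  qed
qed

lemma transpose_image_interval:
  assumes "1 \<le> m" "m < j"
  shows "transpose 1 j ` {1..m} = insert j ({1..m} - {1::nat})"
proof (rule set_eqI)
  fix x
  show "x \<in> transpose 1 j ` {1..m} \<longleftrightarrow> x \<in> insert j ({1..m} - {1})"
    unfolding in_transpose_image_iff using assms by (simp add: transpose_def)
qed

lemma victim_ranking_prefix:
  assumes t: "Suc t \<le> T" and m: "1 \<le> m" "m < h (Suc t)"
  shows "victim \<sigma> (enat T) rk (Suc t) (\<pi> t ` {1..m}) = \<pi> t 1"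
proof (rule victim_eqI)
  have "m \<le> n" using request_pos_bounds[of "Suc t"] t m by simp
  then have "\<pi> t ` {1..m} \<subseteq> {0..<n}" using bij_ranking[of t] t unfolding bij_betw_def by auto
  then show "inj_on rk (\<pi> t ` {1..m})" using inj_on_subset[OF inj_on_rk] by blast
  show "\<forall>q\<in>\<pi> t ` {1..m}. fif_le \<sigma> (enat T) rk (Suc t) q (\<pi> t 1)"
  proof
    fix q assume "q \<in> \<pi> t ` {1..m}"
    then obtain i where i: "i \<in> {1..m}" "q = \<pi> t i" by blast
    show "fif_le \<sigma> (enat T) rk (Suc t) q (\<pi> t 1)"
    proof (cases "i = 1")
      case False
      then have "2 \<le> i" "i < h (Suc t)" using i m by auto
      then show ?thesis using fif_le_front[OF t] i(2) by simp
    qed (simp add: i fif_le_refl)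
  qed
qed (use m in simp)

lemma cache_ranking:
  assumes "t \<le> T" "m \<le> n"
  shows "cache \<sigma> (enat T) rk (\<lambda>m. {0..<m}) m t = \<pi> t ` {1..m}"
  using assms
proof (induction t)
  case 0
  have "(\<lambda>i. i - 1) ` {1..m} = {0..<m}"
    by (rule bij_betw_imp_surj_on, rule bij_betw_byWitness[where f' = Suc]) auto
  then show ?case by (simp add: cache_def)
next
  case (Suc t)
  define j where "j = h (Suc t)"
  have j: "1 \<le> j" "j \<le> n" using request_pos_bounds[of "Suc t"] Suc.prems unfolding j_def by simp_all
  have t: "t \<le> T" using Suc.prems by simp
  have request: "\<sigma> (Suc t) = \<pi> t j" unfolding ranking_requests_def j_def by simp
  have image: "\<pi> (Suc t) ` {1..m} = \<pi> t ` (transpose 1 j ` {1..m})"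
    unfolding j_def by (simp add: image_comp)
  show ?case
  proof (cases "m = 0")
    case False
    then have cache: "cache \<sigma> (enat T) rk (\<lambda>m. {0..<m}) m (Suc t) = fif_update \<sigma> (enat T) rk (Suc t) (\<pi> t ` {1..m})"
      using Suc t by (simp add: cache_Suc)
    show ?thesis
    proof (cases "j \<le> m")
      case True
      then show ?thesis
        using cache image request ranking_mem_image_iff[OF t _ Suc.prems(2), of j] j
        by (simp add: fif_update_def)
    next
      case False
      have victim: "victim \<sigma> (enat T) rk (Suc t) (\<pi> t ` {1..m}) = \<pi> t 1"
        using victim_ranking_prefix[OF Suc.prems(1)] \<open>m \<noteq> 0\<close> False unfolding j_def by simp
      have "inj_on (\<pi> t) {1..n}" using bij_ranking[OF t] by (rule bij_betw_imp_inj_on)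
      then have "\<pi> t ` ({1..m} - {1}) = \<pi> t ` {1..m} - {\<pi> t 1}"
        using Suc.prems(2) \<open>m \<noteq> 0\<close> by (subst inj_on_image_set_diff) auto
      then have "\<pi> (Suc t) ` {1..m} = insert (\<pi> t j) (\<pi> t ` {1..m} - {\<pi> t 1})"
        using image transpose_image_interval[of m j] False \<open>m \<noteq> 0\<close> by simp
      moreover have "\<pi> t j \<notin> \<pi> t ` {1..m}"
        using ranking_mem_image_iff[OF t _ Suc.prems(2), of j] j False by simp
      ultimately show ?thesis using cache request victim by (simp add: fif_update_def)
    qed
  qed (simp add: cache_def)
qed

theorem realises_position_seq:
  "paging_setup {0..<n} rk (\<lambda>m. {0..<m}) \<and> request_seq {0..<n} \<sigma> (enat T) \<and>
   (\<forall>t. 1 \<le> t \<and> t \<le> T \<longrightarrow> position_seq {0..<n} rk (\<lambda>m. {0..<m}) \<sigma> (enat T) t = h t)"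
proof (intro conjI allI impI)
  show "paging_setup {0..<n} rk (\<lambda>m. {0..<m})"
    unfolding paging_setup_def using inj_on_rk by (simp add: atLeastLessThanSuc psubset_insert_iff)
  have request: "\<sigma> t = \<pi> (t - 1) (h t)" and pos: "h t \<in> {1..n}" if "1 \<le> t" "t \<le> T" for t
    using request_pos_bounds[OF that] unfolding ranking_requests_def by simp_all
  show "request_seq {0..<n} \<sigma> (enat T)"
    unfolding request_seq_def
  proof (intro allI impI)
    fix s assume "1 \<le> s \<and> enat s \<le> enat T"
    then have "1 \<le> s" "s \<le> T" by simp_all
    then show "\<sigma> s \<in> {0..<n}"
      using bij_betwE[OF bij_ranking[of "s - 1"]] request pos by simp
  qed
  fix t assume t: "1 \<le> t \<and> t \<le> T"
  have "\<sigma> t \<in> cache \<sigma> (enat T) rk (\<lambda>m. {0..<m}) m (t - 1) \<longleftrightarrow> h t \<le> m" if "m \<le> n" for m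
  proof -
    have "t - 1 \<le> T" using t by linarith
    then show ?thesis
      using cache_ranking[OF _ that] ranking_mem_image_iff[OF _ _ that] request[of t] pos[of t] t
      by simp
  qed
  moreover have "1 \<le> h t" "h t \<le> n" using request_pos_bounds t by simp_all
  ultimately show "position_seq {0..<n} rk (\<lambda>m. {0..<m}) \<sigma> (enat T) t = h t"
    unfolding position_seq_def by (intro belady_pos_eqI) simp_all
qed

end

theorem lemma5:
  shows "(\<forall>(U::'a set) rk C0 \<sigma> N.
            paging_setup U rk C0 \<and> request_seq U \<sigma> N \<longrightarrow>
            repeat_property (position_seq U rk C0 \<sigma> N) N)
       \<and> (\<forall>(T::nat) (h::nat \<Rightarrow> nat).
            (\<forall>t. 1 \<le> t \<and> t \<le> T \<longrightarrow> 1 \<le> h t) \<and> repeat_property h (enat T) \<longrightarrow>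
            (\<exists>(U::nat set) (rk::nat \<Rightarrow> nat) C0 \<sigma>.
               paging_setup U rk C0 \<and> request_seq U \<sigma> (enat T) \<and>
               (\<forall>t. 1 \<le> t \<and> t \<le> T \<longrightarrow> position_seq U rk C0 \<sigma> (enat T) t = h t)))"
proof (intro conjI allI impI)
  fix U :: "'a set" and rk C0 \<sigma> N
  assume "paging_setup U rk C0 \<and> request_seq U \<sigma> N"
  then interpret paging_run U rk C0 \<sigma> N by unfold_locales simp_all
  show "repeat_property (position_seq U rk C0 \<sigma> N) N" by (rule repeat_property_position_seq)
next
  fix T :: nat and h :: "nat \<Rightarrow> nat"
  assume "(\<forall>t. 1 \<le> t \<and> t \<le> T \<longrightarrow> 1 \<le> h t) \<and> repeat_property h (enat T)"
  then interpret repeat_seq T h by unfold_locales simp_all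
  show "\<exists>(U::nat set) (rk::nat \<Rightarrow> nat) C0 \<sigma>.
      paging_setup U rk C0 \<and> request_seq U \<sigma> (enat T) \<and>
      (\<forall>t. 1 \<le> t \<and> t \<le> T \<longrightarrow> position_seq U rk C0 \<sigma> (enat T) t = h t)"
    using realises_position_seq by blast
qed

end
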